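(* Let $C=\{c_1,\dots,c_m\}\subset\mathbb{R}$ with $c_1\le\dots\le c_m$, let $\mathcal{I}$ be a finite set of closed intervals in $\mathbb{R}$ and $f\ge0$ an integer such that every $I\in\mathcal{I}$ satisfies $|I\cap C|>f$. Let $T$ be the output of the following greedy procedure: start with $T=\emptyset$; for $t=1,2,\dots,m$ in this order, if there exist indices $i,j$ with $1\le i\le t\le j\le m$ such that $\delta_{i,j}(f)\ge|T\cap C_{i,j}|+(j-t+1)$ (with $T$ the current set), add $c_t$ to $T$. Then $|T\cap C_{i,j}|\ge\delta_{i,j}(f)$ for all $1\le i\le j\le m$.
   Context: For a set of points $X$, a set of intervals is $X$-disjoint if every point of $X$ lies in at most one of its intervals. For $1\le i\le j\le m$: $C_{i,j}=\{c_i,\dots,c_j\}$; $\mathcal{I}_{i,j}=\{I\in\mathcal{I}: I\cap C\subseteq C_{i,j}\}$; for $J\subseteq C_{i,j}$, $\delta_{i,j}(J)$ is the maximum size of a $(C_{i,j}\setminus J)$-disjoint subset of $\mathcal{I}_{i,j}$; and $\delta_{i,j}(f)=\max_{J\subseteq C_{i,j},|J|\le f}\delta_{i,j}(J)$. *)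

theory Defs
  imports Complex_Main
begin

definition Cset :: "(nat \<Rightarrow> real) \<Rightarrow> nat \<Rightarrow> nat \<Rightarrow> real set" where
  "Cset c i j = c ` {i..j}"

definition X_disjoint :: "real set \<Rightarrow> real set set \<Rightarrow> bool" where
  "X_disjoint X S = (\<forall>x\<in>X. card {I\<in>S. x \<in> I} \<le> 1)"

definition Iij :: "(nat \<Rightarrow> real) \<Rightarrow> nat \<Rightarrow> real set set \<Rightarrow> nat \<Rightarrow> nat \<Rightarrow> real set set" where
  "Iij c m \<I> i j = {I\<in>\<I>. I \<inter> Cset c 1 m \<subseteq> Cset c i j}"

definition deltaJ :: "(nat \<Rightarrow> real) \<Rightarrow> nat \<Rightarrow> real set set \<Rightarrow> nat \<Rightarrow> nat \<Rightarrow> real set \<Rightarrow> nat" where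
  "deltaJ c m \<I> i j J =
     Max (card ` {S. S \<subseteq> Iij c m \<I> i j \<and> X_disjoint (Cset c i j - J) S})"

definition delta :: "(nat \<Rightarrow> real) \<Rightarrow> nat \<Rightarrow> real set set \<Rightarrow> nat \<Rightarrow> nat \<Rightarrow> nat \<Rightarrow> nat" where
  "delta c m \<I> f i j =
     Max {deltaJ c m \<I> i j J | J. J \<subseteq> Cset c i j \<and> card J \<le> f}"

primrec greedy :: "(nat \<Rightarrow> real) \<Rightarrow> nat \<Rightarrow> real set set \<Rightarrow> nat \<Rightarrow> nat \<Rightarrow> real set" where
  "greedy c m \<I> f 0 = {}"
| "greedy c m \<I> f (Suc t) =
     (let T = greedy c m \<I> f t in
      if (\<exists>i j. 1 \<le> i \<and> i \<le> Suc t \<and> Suc t \<le> j \<and> j \<le> m \<and>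
               delta c m \<I> f i j \<ge> card (T \<inter> Cset c i j) + (j - Suc t + 1))
      then insert (c (Suc t)) T else T)"

end

theory Submission
  imports Defs
begin

text \<open>
  Call a family admissible for the window C_{i,j} if it is a (C_{i,j} - J)-disjoint
  subfamily of I_{i,j} for some J with |J| \<le> f. Two distinct members of an admissible
  family never have nested traces on C: the smaller trace has more than f points, so one
  of them lies outside J and would be covered twice. Closed intervals through the last
  point c_j of the window have nested traces on C_{i,j}, so at most one of them is in an
  admissible family; removing it leaves a family admissible for C_{i,j-1}. Hence
  delta_{i,j}(f) \<le> delta_{i,j-1}(f) + 1 and delta_{i,i}(f) \<le> 1.

  The theorem follows by induction on t for the windows C_{i,t}: if C_{i,t+1} is not yet
  served by the current T, the greedy rule (already with j = t+1) adds c_{t+1}, which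
  makes up for the increase of delta.
\<close>

lemma finite_Cset [simp]: "finite (Cset c i j)"
  unfolding Cset_def by simp

lemma Cset_Suc: "i \<le> Suc j \<Longrightarrow> Cset c i (Suc j) = insert (c (Suc j)) (Cset c i j)"
  unfolding Cset_def by (simp add: atLeastAtMostSuc_conv)

lemma X_disjoint_mono:
  assumes "X_disjoint X S" "finite S" "Y \<subseteq> X" "S' \<subseteq> S"
  shows "X_disjoint Y S'"
  unfolding X_disjoint_def
proof
  fix x assume "x \<in> Y"
  have "card {I\<in>S'. x \<in> I} \<le> card {I\<in>S. x \<in> I}"
    using assms(2,4) by (intro card_mono) auto
  also have "\<dots> \<le> 1"
    using assms(1,3) \<open>x \<in> Y\<close> by (auto simp: X_disjoint_def)
  finally show "card {I\<in>S'. x \<in> I} \<le> 1" .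
qed

lemma X_disjoint_common_point_eq:
  assumes "X_disjoint X S" "finite S" "I1 \<in> S" "I2 \<in> S" "x \<in> X" "x \<in> I1" "x \<in> I2"
  shows "I1 = I2"
proof -
  have "card {I1, I2} \<le> card {I\<in>S. x \<in> I}"
    using assms(2-7) by (intro card_mono) auto
  also have "\<dots> \<le> 1"
    using assms(1,5) by (auto simp: X_disjoint_def)
  finally show ?thesis
    by (cases "I1 = I2") auto
qed

lemma closed_intervals_through_point_nested:
  fixes p :: "'a::linorder"
  assumes "p \<in> {a1..b1}" "p \<in> {a2..b2}" "\<forall>x\<in>X. x \<le> p"
  shows "{a1..b1} \<inter> X \<subseteq> {a2..b2} \<or> {a2..b2} \<inter> X \<subseteq> {a1..b1}"
proof -
  have "{b..d} \<inter> X \<subseteq> {a..e}" if "a \<le> b" "p \<le> e" for a b d e :: 'a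
  proof
    fix x assume "x \<in> {b..d} \<inter> X"
    with assms(3) have "b \<le> x" "x \<le> p" by auto
    with that show "x \<in> {a..e}" by auto
  qed
  with assms show ?thesis
    by (metis atLeastAtMost_iff linorder_linear)
qed

lemma finite_Iij: "finite \<I> \<Longrightarrow> finite (Iij c m \<I> i j)"
  unfolding Iij_def by simp

lemma deltaJ_le_iff:
  assumes "finite \<I>"
  shows "deltaJ c m \<I> i j J \<le> k \<longleftrightarrow>
    (\<forall>S. S \<subseteq> Iij c m \<I> i j \<longrightarrow> X_disjoint (Cset c i j - J) S \<longrightarrow> card S \<le> k)"
proof -
  have "finite {S. S \<subseteq> Iij c m \<I> i j \<and> X_disjoint (Cset c i j - J) S}"
    by (rule finite_subset[of _ "Pow (Iij c m \<I> i j)"]) (auto simp: finite_Iij assms)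
  moreover have "{} \<in> {S. S \<subseteq> Iij c m \<I> i j \<and> X_disjoint (Cset c i j - J) S}"
    by (simp add: X_disjoint_def)
  ultimately show ?thesis
    unfolding deltaJ_def by (subst Max_le_iff) auto
qed

lemma delta_le_iff:
  "delta c m \<I> f i j \<le> k \<longleftrightarrow>
    (\<forall>J. J \<subseteq> Cset c i j \<longrightarrow> card J \<le> f \<longrightarrow> deltaJ c m \<I> i j J \<le> k)"
proof -
  have "{deltaJ c m \<I> i j J | J. J \<subseteq> Cset c i j \<and> card J \<le> f}
      = deltaJ c m \<I> i j ` {J. J \<subseteq> Cset c i j \<and> card J \<le> f}"
    by auto
  moreover have "finite {J. J \<subseteq> Cset c i j \<and> card J \<le> f}"
    by (rule finite_subset[of _ "Pow (Cset c i j)"]) auto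
  moreover have "{} \<in> {J. J \<subseteq> Cset c i j \<and> card J \<le> f}"
    by simp
  ultimately show ?thesis
    unfolding delta_def by (subst Max_le_iff) auto
qed

lemma card_le_deltaJ:
  "\<lbrakk>finite \<I>; S \<subseteq> Iij c m \<I> i j; X_disjoint (Cset c i j - J) S\<rbrakk>
    \<Longrightarrow> card S \<le> deltaJ c m \<I> i j J"
  using deltaJ_le_iff[of \<I> c m i j J "deltaJ c m \<I> i j J"] by blast

lemma deltaJ_le_delta:
  "\<lbrakk>J \<subseteq> Cset c i j; card J \<le> f\<rbrakk> \<Longrightarrow> deltaJ c m \<I> i j J \<le> delta c m \<I> f i j"
  using delta_le_iff[of c m \<I> f i j "delta c m \<I> f i j"] by blast

lemma admissible_nested_traces_eq:
  assumes fin: "finite \<I>"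
    and big: "\<forall>I\<in>\<I>. card (I \<inter> Cset c 1 m) > f"
    and S: "S \<subseteq> Iij c m \<I> i j" and dis: "X_disjoint (Cset c i j - J) S"
    and J: "J \<subseteq> Cset c i j" "card J \<le> f"
    and I: "I1 \<in> S" "I2 \<in> S" and nested: "I2 \<inter> Cset c 1 m \<subseteq> I1"
  shows "I1 = I2"
proof -
  have "I2 \<in> \<I>" and I2_trace: "I2 \<inter> Cset c 1 m \<subseteq> Cset c i j"
    using S I by (auto simp: Iij_def)
  have "\<not> I2 \<inter> Cset c 1 m \<subseteq> J"
  proof
    assume "I2 \<inter> Cset c 1 m \<subseteq> J"
    then have "card (I2 \<inter> Cset c 1 m) \<le> card J"
      using J(1) by (intro card_mono) (auto intro: finite_subset)
    with big \<open>I2 \<in> \<I>\<close> J(2) show False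
      by fastforce
  qed
  then obtain x where "x \<in> I2" "x \<in> Cset c 1 m" "x \<notin> J"
    by blast
  moreover have "finite S"
    using S finite_Iij[OF fin] by (rule finite_subset)
  ultimately show ?thesis
    using I2_trace nested by (intro X_disjoint_common_point_eq[OF dis _ I]) auto
qed

lemma delta_single_le_one:
  assumes fin: "finite \<I>" and big: "\<forall>I\<in>\<I>. card (I \<inter> Cset c 1 m) > f"
  shows "delta c m \<I> f i i \<le> 1"
  unfolding delta_le_iff deltaJ_le_iff[OF fin]
proof (intro allI impI)
  fix J S assume J: "J \<subseteq> Cset c i i" "card J \<le> f"
    and S: "S \<subseteq> Iij c m \<I> i i" and dis: "X_disjoint (Cset c i i - J) S"
  have trace: "I \<inter> Cset c 1 m = {c i}" if "I \<in> S" for I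
  proof -
    have "I \<in> \<I>" "I \<inter> Cset c 1 m \<subseteq> {c i}"
      using S that by (auto simp: Iij_def Cset_def)
    moreover from this(1) big have "I \<inter> Cset c 1 m \<noteq> {}"
      by fastforce
    ultimately show ?thesis
      by blast
  qed
  have "I1 = I2" if "I1 \<in> S" "I2 \<in> S" for I1 I2
    using trace[OF that(1)] trace[OF that(2)]
    by (intro admissible_nested_traces_eq[OF fin big S dis J that]) auto
  moreover have "finite S"
    using S finite_Iij[OF fin] by (rule finite_subset)
  ultimately show "card S \<le> 1"
    by (simp add: card_le_Suc0_iff_eq)
qed

lemma delta_Suc_le:
  assumes sorted: "\<And>k l. 1 \<le> k \<Longrightarrow> k \<le> l \<Longrightarrow> l \<le> m \<Longrightarrow> c k \<le> c l"
    and fin: "finite \<I>"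
    and closed: "\<forall>I\<in>\<I>. \<exists>a b. a \<le> b \<and> I = {a..b}"
    and big: "\<forall>I\<in>\<I>. card (I \<inter> Cset c 1 m) > f"
    and ij: "1 \<le> i" "i \<le> Suc j" "Suc j \<le> m"
  shows "delta c m \<I> f i (Suc j) \<le> delta c m \<I> f i j + 1"
  unfolding delta_le_iff deltaJ_le_iff[OF fin]
proof (intro allI impI)
  fix J S assume J: "J \<subseteq> Cset c i (Suc j)" "card J \<le> f"
    and S: "S \<subseteq> Iij c m \<I> i (Suc j)" and dis: "X_disjoint (Cset c i (Suc j) - J) S"
  define p where "p = c (Suc j)"
  define S1 where "S1 = {I\<in>S. p \<in> I}"
  have finS: "finite S"
    using S finite_Iij[OF fin] by (rule finite_subset)
  have C_Suc: "Cset c i (Suc j) = insert p (Cset c i j)"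
    using ij by (simp add: Cset_Suc p_def)
  have "I1 = I2" if "I1 \<in> S1" "I2 \<in> S1" for I1 I2
  proof -
    have "I1 \<in> S" "I2 \<in> S"
      using that by (auto simp: S1_def)
    then have "I1 \<in> \<I>" "I2 \<in> \<I>"
      and traces: "I1 \<inter> Cset c 1 m \<subseteq> Cset c i (Suc j)" "I2 \<inter> Cset c 1 m \<subseteq> Cset c i (Suc j)"
      using S by (auto simp: Iij_def)
    then obtain a1 b1 a2 b2 where I: "I1 = {a1..b1}" "I2 = {a2..b2}"
      using closed by meson
    have "\<forall>x\<in>Cset c i (Suc j). x \<le> p"
      using ij sorted by (auto simp: Cset_def p_def)
    then have "I1 \<inter> Cset c i (Suc j) \<subseteq> I2 \<or> I2 \<inter> Cset c i (Suc j) \<subseteq> I1"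
      using that unfolding I S1_def by (intro closed_intervals_through_point_nested) auto
    then show ?thesis
    proof
      assume "I1 \<inter> Cset c i (Suc j) \<subseteq> I2"
      then have "I1 \<inter> Cset c 1 m \<subseteq> I2"
        using traces(1) by blast
      then show ?thesis
        using admissible_nested_traces_eq[OF fin big S dis J \<open>I2 \<in> S\<close> \<open>I1 \<in> S\<close>] by simp
    next
      assume "I2 \<inter> Cset c i (Suc j) \<subseteq> I1"
      then have "I2 \<inter> Cset c 1 m \<subseteq> I1"
        using traces(2) by blast
      then show ?thesis
        using admissible_nested_traces_eq[OF fin big S dis J \<open>I1 \<in> S\<close> \<open>I2 \<in> S\<close>] by simp
    qed
  qed
  then have card_S1: "card S1 \<le> 1"
    using finS by (simp add: S1_def card_le_Suc0_iff_eq)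
  have "S - S1 \<subseteq> Iij c m \<I> i j"
    using S C_Suc by (auto simp: S1_def Iij_def)
  moreover have "X_disjoint (Cset c i j - J \<inter> Cset c i j) (S - S1)"
    using C_Suc by (intro X_disjoint_mono[OF dis finS]) auto
  ultimately have "card (S - S1) \<le> deltaJ c m \<I> i j (J \<inter> Cset c i j)"
    by (rule card_le_deltaJ[OF fin])
  also have "\<dots> \<le> delta c m \<I> f i j"
  proof (rule deltaJ_le_delta)
    have "finite J"
      using J(1) by (rule finite_subset) simp
    then show "card (J \<inter> Cset c i j) \<le> f"
      using J(2) by (meson Int_lower1 card_mono le_trans)
  qed simp
  finally have "card (S - S1) \<le> delta c m \<I> f i j" .
  moreover have "card S = card (S - S1) + card S1"
    using finS by (simp add: S1_def card_Diff_subset card_mono)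
  ultimately show "card S \<le> delta c m \<I> f i j + 1"
    using card_S1 by linarith
qed

lemma greedy_mono: "t \<le> t' \<Longrightarrow> greedy c m \<I> f t \<subseteq> greedy c m \<I> f t'"
proof (induction t' rule: dec_induct)
  case (step n)
  then show ?case
    by (auto simp: Let_def)
qed simp

lemma greedy_Suc_if_deficient:
  assumes "1 \<le> i" "i \<le> Suc t" "Suc t \<le> m"
    and "delta c m \<I> f i (Suc t) > card (greedy c m \<I> f t \<inter> Cset c i (Suc t))"
  shows "greedy c m \<I> f (Suc t) = insert (c (Suc t)) (greedy c m \<I> f t)"
proof -
  have "\<exists>i j. 1 \<le> i \<and> i \<le> Suc t \<and> Suc t \<le> j \<and> j \<le> m \<and>
      delta c m \<I> f i j \<ge> card (greedy c m \<I> f t \<inter> Cset c i j) + (j - Suc t + 1)"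
    using assms by (intro exI[of _ i] exI[of _ "Suc t"]) auto
  then show ?thesis
    by (simp only: greedy.simps Let_def if_P)
qed

lemma delta_Suc_le_card_insert:
  assumes sorted: "\<And>k l. 1 \<le> k \<Longrightarrow> k \<le> l \<Longrightarrow> l \<le> m \<Longrightarrow> c k \<le> c l"
    and fin: "finite \<I>"
    and closed: "\<forall>I\<in>\<I>. \<exists>a b. a \<le> b \<and> I = {a..b}"
    and big: "\<forall>I\<in>\<I>. card (I \<inter> Cset c 1 m) > f"
    and it: "1 \<le> i" "i \<le> t" "Suc t \<le> m"
    and served: "delta c m \<I> f i t \<le> card (T \<inter> Cset c i t)"
    and deficient: "delta c m \<I> f i (Suc t) > card (T \<inter> Cset c i (Suc t))"
  shows "delta c m \<I> f i (Suc t) \<le> card (insert (c (Suc t)) T \<inter> Cset c i (Suc t))"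
proof -
  have C_Suc: "Cset c i (Suc t) = insert (c (Suc t)) (Cset c i t)"
    using it by (simp add: Cset_Suc)
  have new: "c (Suc t) \<notin> Cset c i t"
  proof
    assume "c (Suc t) \<in> Cset c i t"
    then have "Cset c i (Suc t) = Cset c i t"
      using C_Suc by (simp add: insert_absorb)
    then show False
      using deficient served by (simp add: delta_def deltaJ_def Iij_def)
  qed
  have "delta c m \<I> f i (Suc t) \<le> delta c m \<I> f i t + 1"
    using it by (intro delta_Suc_le[OF sorted fin closed big]) auto
  also have "\<dots> \<le> card (insert (c (Suc t)) (T \<inter> Cset c i t))"
    using served new by simp
  also have "\<dots> = card (insert (c (Suc t)) T \<inter> Cset c i (Suc t))"
    using C_Suc by (intro arg_cong[where f = card]) auto
  finally show ?thesis .
qed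

lemma delta_le_card_greedy_window:
  assumes sorted: "\<And>k l. 1 \<le> k \<Longrightarrow> k \<le> l \<Longrightarrow> l \<le> m \<Longrightarrow> c k \<le> c l"
    and fin: "finite \<I>"
    and closed: "\<forall>I\<in>\<I>. \<exists>a b. a \<le> b \<and> I = {a..b}"
    and big: "\<forall>I\<in>\<I>. card (I \<inter> Cset c 1 m) > f"
  shows "1 \<le> i \<Longrightarrow> i \<le> t \<Longrightarrow> t \<le> m \<Longrightarrow>
    delta c m \<I> f i t \<le> card (greedy c m \<I> f t \<inter> Cset c i t)"
proof (induction t arbitrary: i)
  case 0
  then show ?case by simp
next
  case (Suc t)
  define T where "T = greedy c m \<I> f t"
  have "T \<subseteq> greedy c m \<I> f (Suc t)"
    unfolding T_def by (rule greedy_mono) simp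
  then have T_le: "card (T \<inter> Cset c i (Suc t)) \<le> card (greedy c m \<I> f (Suc t) \<inter> Cset c i (Suc t))"
    by (intro card_mono) auto
  show ?case
  proof (cases "delta c m \<I> f i (Suc t) \<le> card (T \<inter> Cset c i (Suc t))")
    case True
    with T_le show ?thesis
      by linarith
  next
    case deficient: False
    then have step: "greedy c m \<I> f (Suc t) = insert (c (Suc t)) T"
      using Suc.prems unfolding T_def by (intro greedy_Suc_if_deficient) auto
    show ?thesis
    proof (cases "i = Suc t")
      case True
      then have "card (insert (c (Suc t)) T \<inter> Cset c i (Suc t)) = 1"
        by (auto simp: Cset_def)
      with True step delta_single_le_one[OF fin big] show ?thesis
        by metis
    next
      case False
      with Suc have "delta c m \<I> f i t \<le> card (T \<inter> Cset c i t)"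
        by (simp add: T_def)
      with False Suc.prems deficient show ?thesis
        unfolding step by (intro delta_Suc_le_card_insert[OF sorted fin closed big]) auto
    qed
  qed
qed

theorem lemma7:
  fixes c :: "nat \<Rightarrow> real" and m f :: nat and \<I> :: "real set set"
  assumes sorted: "\<And>k l. 1 \<le> k \<Longrightarrow> k \<le> l \<Longrightarrow> l \<le> m \<Longrightarrow> c k \<le> c l"
    and fin: "finite \<I>"
    and closed: "\<forall>I\<in>\<I>. \<exists>a b. a \<le> b \<and> I = {a..b}"
    and big: "\<forall>I\<in>\<I>. card (I \<inter> Cset c 1 m) > f"
  shows "\<forall>i j. 1 \<le> i \<longrightarrow> i \<le> j \<longrightarrow> j \<le> m \<longrightarrow>
           card (greedy c m \<I> f m \<inter> Cset c i j) \<ge> delta c m \<I> f i j"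
proof (intro allI impI)
  fix i j assume ij: "1 \<le> i" "i \<le> j" "j \<le> m"
  have "delta c m \<I> f i j \<le> card (greedy c m \<I> f j \<inter> Cset c i j)"
    using delta_le_card_greedy_window[OF sorted fin closed big ij] .
  also have "\<dots> \<le> card (greedy c m \<I> f m \<inter> Cset c i j)"
    using greedy_mono[OF ij(3), of c m \<I> f] by (intro card_mono) auto
  finally show "card (greedy c m \<I> f m \<inter> Cset c i j) \<ge> delta c m \<I> f i j" .
qed

end
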